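(* Let $K\ge1$, $N_1,\dots,N_K\ge1$, $\mathbb{T}=\mathbb{R}^{N_1\times\cdots\times N_K}$, let $X\in\mathbb{T}$ be a random mode-exchangeable tensor with entries in $[-1,1]$, and let $U\in\mathbb{T}$ be fixed. Let $\mathcal{F}_k=\sigma(\bar X_k)$ for $k=0,\dots,K$ and $N_0=1$. Then for any $k\in\{0,1,\dots,K-1\}$ and $\lambda\in\mathbb{R}$, \[ \mathbb{E}\left[\exp\left\{\lambda\left(\langle\bar U_{k+1},\bar X_{k+1}\rangle_{\mathbb{T}_{k+1}}-N_{k+1}\langle\bar U_k,\bar X_k\rangle_{\mathbb{T}_k}\right)\right\}\mid\mathcal{F}_k\right]\le\exp\left\{\frac{\lambda^2}{2}\prod_{l=0}^kN_l\cdot\left\|\bar U_{k+1}\times_{k+1}\mathsf{A}_{N_{k+1}}\right\|^2_{\mathbb{T}_{k+1}}\right\}. \]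
   Context: $\mathbb{T}_k=\mathbb{R}^{N_1\times\cdots\times N_k}$ ($\mathbb{T}_0=\mathbb{R}$), with inner product $\langle A,B\rangle_{\mathbb{T}_k}=\sum A_{i_1\cdots i_k}B_{i_1\cdots i_k}$ and norm $\|A\|_{\mathbb{T}_k}=\sqrt{\langle A,A\rangle_{\mathbb{T}_k}}$. For $A\in\mathbb{T}$, $\bar A_k\in\mathbb{T}_k$ has entries $(\bar A_k)_{i_1\cdots i_k}=\frac1{N_{k+1}\cdots N_K}\sum_{i_{k+1},\dots,i_K}A_{i_1\cdots i_K}$ (so $\bar A_K=A$ and $\bar A_0$ is the mean of all entries). $k$-mode product with $B\in\mathbb{R}^{M\times N_k}$: $(A\times_kB)_{i_1\cdots i_{k-1}j\cdots}=\sum_{i_k}B_{ji_k}A_{i_1\cdots i_k\cdots}$. $X$ is mode-exchangeable if $X\times_l\Pi_l\overset{d}{=}X$ for every $l$ and every $N_l\times N_l$ permutation matrix $\Pi_l$. $\mathsf{A}_n\in\mathbb{R}^{n\times n}$ is the matrix whose $i$-th row, for $i\in[n-1]$, is $(0,\dots,0,1,-\frac1{n-i},\dots,-\frac1{n-i})$ (with $i-1$ leading zeros, then $1$, then $n-i$ entries $-\frac1{n-i}$), and whose $n$-th row is zero ($\mathsf{A}_1=0$). *)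

theory Defs
  imports "HOL-Probability.Probability"
begin

text \<open>Tensors in R^{N_1 x ... x N_k} are represented as functions on index lists
  (0-based indices); the dimension vector is a list ns.\<close>

definition tidx :: "nat list \<Rightarrow> nat list set" where
  "tidx ns = {is. length is = length ns \<and> (\<forall>j<length ns. is ! j < ns ! j)}"

definition tinner :: "nat list \<Rightarrow> (nat list \<Rightarrow> real) \<Rightarrow> (nat list \<Rightarrow> real) \<Rightarrow> real" where
  "tinner ns A B = (\<Sum>i\<in>tidx ns. A i * B i)"

definition tnorm :: "nat list \<Rightarrow> (nat list \<Rightarrow> real) \<Rightarrow> real" where
  "tnorm ns A = sqrt (tinner ns A A)"

text \<open>Averaging over the trailing modes: tavg N k A is \<open>\<bar>A\<close>_k in T_k, N = [N_1,...,N_K].\<close>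
definition tavg :: "nat list \<Rightarrow> nat \<Rightarrow> (nat list \<Rightarrow> real) \<Rightarrow> (nat list \<Rightarrow> real)" where
  "tavg N k A = (\<lambda>idx. (\<Sum>j\<in>tidx (drop k N). A (idx @ j)) / real (prod_list (drop k N)))"

text \<open>Mode product A \<times>_l B, where mode l is stored at 0-based position pos = l-1,
  n = N_l is the size of that mode, and B is an (M x n) matrix as a function.\<close>
definition modeprod :: "nat \<Rightarrow> nat \<Rightarrow> (nat \<Rightarrow> nat \<Rightarrow> real) \<Rightarrow> (nat list \<Rightarrow> real) \<Rightarrow> (nat list \<Rightarrow> real)" where
  "modeprod n pos B A = (\<lambda>idx. \<Sum>i<n. B (idx ! pos) i * A (idx[pos := i]))"

definition perm_mat :: "(nat \<Rightarrow> nat) \<Rightarrow> nat \<Rightarrow> nat \<Rightarrow> real" where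
  "perm_mat p j i = (if i = p j then 1 else 0)"

definition Amat :: "nat \<Rightarrow> nat \<Rightarrow> nat \<Rightarrow> real" where
  "Amat n r c = (if r + 1 < n \<and> c < n then
       (if c = r then 1 else if r < c then - 1 / real (n - 1 - r) else 0) else 0)"

definition tensor_law :: "'a measure \<Rightarrow> nat list \<Rightarrow> ('a \<Rightarrow> nat list \<Rightarrow> real) \<Rightarrow> (nat list \<Rightarrow> real) measure" where
  "tensor_law M ns X = distr M (PiM (tidx ns) (\<lambda>_. borel)) (\<lambda>\<omega>. restrict (X \<omega>) (tidx ns))"

definition mode_exchangeable :: "'a measure \<Rightarrow> nat list \<Rightarrow> ('a \<Rightarrow> nat list \<Rightarrow> real) \<Rightarrow> bool" where
  "mode_exchangeable M N X \<longleftrightarrow>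
     (\<forall>l<length N. \<forall>p. bij_betw p {..<N ! l} {..<N ! l} \<longrightarrow>
        tensor_law M N (\<lambda>\<omega>. modeprod (N ! l) l (perm_mat p) (X \<omega>)) = tensor_law M N X)"

definition sigma_avg :: "'a measure \<Rightarrow> nat list \<Rightarrow> nat \<Rightarrow> ('a \<Rightarrow> nat list \<Rightarrow> real) \<Rightarrow> 'a measure" where
  "sigma_avg M N k X = vimage_algebra (space M)
     (\<lambda>\<omega>. restrict (tavg N k (X \<omega>)) (tidx (take k N))) (PiM (tidx (take k N)) (\<lambda>_. borel))"

end

theory Submission
  imports Defs "HOL-Combinatorics.Multiset_Permutations"
begin

text \<open>
  The statistic bar X_k generating F_k is unchanged when mode k+1 of X is permuted, while by
  mode-exchangeability such a permutation does not change the law of X. Hence the conditional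
  expectation of exp(lambda D(X)), D the increment, equals that of the average of exp(lambda D)
  over all N_{k+1}! permutations of mode k+1 of X, and it suffices to bound this average for
  each fixed tensor bounded by 1.

  For a fixed tensor, D at a uniformly random permutation is a linear statistic of sampling
  without replacement from the N_{k+1} slices of bar X_{k+1}. Revealing the permutation one
  position at a time, each step is controlled by Hoeffding's lemma combined with Cauchy-Schwarz
  over the N_1 ... N_k entries of a slice. The resulting variance proxy is the sum over r of
  the squared distances between the r-th slice of bar U_{k+1} and the mean of the later slices,
  which is exactly the squared norm of bar U_{k+1} x_{k+1} A_{N_{k+1}}.
\<close>

section \<open>Linear statistics of random orderings\<close>

lemma Hoeffding_uniform_sum_pos:
  fixes z :: "'b \<Rightarrow> real"
  assumes "finite A" "A \<noteq> {}" "\<And>a. a \<in> A \<Longrightarrow> z a \<in> {lo..hi}" "l > 0"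
  shows "(\<Sum>a\<in>A. exp (l * (z a - (\<Sum>b\<in>A. z b) / card A))) \<le> card A * exp (l\<^sup>2 * (hi - lo)\<^sup>2 / 8)"
proof -
  let ?p = "pmf_of_set A"
  let ?E = "measure_pmf.expectation ?p z"
  have "finite (set_pmf ?p)" using assms(1,2) by simp
  have "interval_bounded_random_variable ?p z lo hi"
    by unfold_locales (use assms in \<open>auto simp: AE_measure_pmf_iff\<close>)
  then have "nn_integral ?p (\<lambda>a. exp (l * (z a - ?E))) \<le> ennreal (exp (l\<^sup>2 * (hi - lo)\<^sup>2 / 8))"
    using assms(4) by (rule interval_bounded_random_variable.Hoeffdings_lemma_nn_integral)
  moreover have "integrable ?p (\<lambda>a. exp (l * (z a - ?E)))"
    using \<open>finite (set_pmf ?p)\<close> by (rule integrable_measure_pmf_finite)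
  then have "nn_integral ?p (\<lambda>a. exp (l * (z a - ?E)))
      = ennreal ((\<Sum>a\<in>A. exp (l * (z a - ?E))) / card A)"
    using assms(1,2) by (simp add: nn_integral_eq_integral integral_pmf_of_set)
  moreover have "?E = (\<Sum>b\<in>A. z b) / card A"
    using assms(1,2) by (simp add: integral_pmf_of_set)
  moreover have "card A > 0" using assms(1,2) by (simp add: card_gt_0_iff)
  ultimately show ?thesis by (simp add: divide_le_eq mult.commute)
qed

lemma Hoeffding_uniform_sum:
  fixes z :: "'b \<Rightarrow> real"
  assumes "finite A" "A \<noteq> {}" "\<And>a. a \<in> A \<Longrightarrow> z a \<in> {lo..hi}"
  shows "(\<Sum>a\<in>A. exp (l * (z a - (\<Sum>b\<in>A. z b) / card A))) \<le> card A * exp (l\<^sup>2 * (hi - lo)\<^sup>2 / 8)"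
proof (cases l "0::real" rule: linorder_cases)
  case less
  have "(\<Sum>a\<in>A. exp ((-l) * (- z a - (\<Sum>b\<in>A. - z b) / card A)))
      \<le> card A * exp ((-l)\<^sup>2 * (- lo - (- hi))\<^sup>2 / 8)"
    by (rule Hoeffding_uniform_sum_pos) (use less assms in auto)
  then show ?thesis by (simp add: sum_negf algebra_simps power2_eq_square)
qed (use Hoeffding_uniform_sum_pos[OF assms] in auto)

definition inner_on :: "'i set \<Rightarrow> ('i \<Rightarrow> real) \<Rightarrow> ('i \<Rightarrow> real) \<Rightarrow> real" where
  "inner_on I c w = (\<Sum>i\<in>I. c i * w i)"

definition set_mean :: "'b set \<Rightarrow> ('b \<Rightarrow> 'i \<Rightarrow> real) \<Rightarrow> 'i \<Rightarrow> real" where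
  "set_mean A v = (\<lambda>i. (\<Sum>a\<in>A. v a i) / card A)"

definition list_mean :: "('i \<Rightarrow> real) list \<Rightarrow> 'i \<Rightarrow> real" where
  "list_mean cs = (\<lambda>i. (\<Sum>j<length cs. (cs ! j) i) / length cs)"

definition perm_stat ::
    "'i set \<Rightarrow> ('b \<Rightarrow> 'i \<Rightarrow> real) \<Rightarrow> ('i \<Rightarrow> real) \<Rightarrow> ('i \<Rightarrow> real) list \<Rightarrow> 'b list \<Rightarrow> real" where
  "perm_stat I v m cs ps = (\<Sum>j<length cs. inner_on I (cs ! j) (\<lambda>i. v (ps ! j) i - m i))"

fun tail_mean_dev :: "'i set \<Rightarrow> ('i \<Rightarrow> real) list \<Rightarrow> real" where
  "tail_mean_dev I [] = 0"
| "tail_mean_dev I (c # cs) =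
     (if cs = [] then 0 else (\<Sum>i\<in>I. (c i - list_mean cs i)\<^sup>2) + tail_mean_dev I cs)"

lemma abs_inner_on_le:
  assumes "\<forall>i\<in>I. \<bar>w i\<bar> \<le> 1"
  shows "\<bar>inner_on I c w\<bar> \<le> (\<Sum>i\<in>I. \<bar>c i\<bar>)"
proof -
  have "\<bar>inner_on I c w\<bar> \<le> (\<Sum>i\<in>I. \<bar>c i * w i\<bar>)" unfolding inner_on_def by (rule sum_abs)
  also have "\<dots> \<le> (\<Sum>i\<in>I. \<bar>c i\<bar>)"
    using assms by (intro sum_mono) (auto simp: abs_mult intro: mult_left_le)
  finally show ?thesis .
qed

lemma sum_exp_inner_on_centred_le:
  assumes "finite A" "A \<noteq> {}" "\<forall>a\<in>A. \<forall>i\<in>I. \<bar>v a i\<bar> \<le> 1"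
  shows "(\<Sum>a\<in>A. exp (t * inner_on I c (\<lambda>i. v a i - set_mean A v i)))
    \<le> card A * exp (t\<^sup>2 / 2 * card I * (\<Sum>i\<in>I. (c i)\<^sup>2))"
proof -
  define z where "z a = inner_on I c (v a)" for a
  define s where "s = (\<Sum>i\<in>I. \<bar>c i\<bar>)"
  have centred: "inner_on I c (\<lambda>i. v a i - set_mean A v i) = z a - (\<Sum>b\<in>A. z b) / card A" for a
    unfolding z_def inner_on_def set_mean_def
    by (simp add: algebra_simps sum_subtractf sum_distrib_left sum_divide_distrib[symmetric]
        flip: sum.swap[of _ A I])
  have "(\<Sum>a\<in>A. exp (t * (z a - (\<Sum>b\<in>A. z b) / card A))) \<le> card A * exp (t\<^sup>2 * (s - - s)\<^sup>2 / 8)"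
  proof (rule Hoeffding_uniform_sum[OF assms(1,2)])
    fix a assume "a \<in> A"
    then have "\<bar>z a\<bar> \<le> s" unfolding z_def s_def using assms(3) by (intro abs_inner_on_le) auto
    then show "z a \<in> {- s..s}" by auto
  qed
  also have "\<dots> \<le> card A * exp (t\<^sup>2 / 2 * card I * (\<Sum>i\<in>I. (c i)\<^sup>2))"
  proof -
    have "s\<^sup>2 \<le> (\<Sum>i\<in>I. \<bar>c i\<bar>\<^sup>2) * card I" unfolding s_def by (rule sum_squared_le_sum_of_squares)
    then have "t\<^sup>2 * s\<^sup>2 \<le> t\<^sup>2 * ((\<Sum>i\<in>I. (c i)\<^sup>2) * card I)" by (simp add: mult_left_mono)
    then have "t\<^sup>2 * (s - - s)\<^sup>2 / 8 \<le> t\<^sup>2 / 2 * card I * (\<Sum>i\<in>I. (c i)\<^sup>2)"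
      by (simp add: power2_eq_square algebra_simps)
    then show ?thesis by (intro mult_left_mono) auto
  qed
  finally show ?thesis by (simp add: centred)
qed

lemma set_mean_Diff_singleton:
  assumes "finite A" "a \<in> A"
  shows "real (card A - 1) * (set_mean (A - {a}) v i - set_mean A v i) = set_mean A v i - v a i"
proof -
  define S where "S = (\<Sum>b\<in>A - {a}. v b i)"
  have sum_A: "(\<Sum>b\<in>A. v b i) = v a i + S" unfolding S_def using assms by (simp add: sum.remove)
  obtain L where L: "card A = Suc L" using assms by (cases "card A") auto
  have card: "card (A - {a}) = L" using assms L by simp
  show ?thesis
  proof (cases "L = 0")
    case True
    then have "A - {a} = {}" using assms(1) card by (metis card_0_eq finite_Diff)
    then have "A = {a}" using assms(2) by auto
    then show ?thesis by (simp add: set_mean_def)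
  next
    case False
    have "real L * (S / L - (v a i + S) / (L + 1)) = S - L * (v a i + S) / (L + 1)"
      using False by (simp add: right_diff_distrib)
    also have "\<dots> = (v a i + S) / (L + 1) - v a i"
      by (simp add: field_simps)
    finally show ?thesis unfolding set_mean_def sum_A card L S_def[symmetric] by simp
  qed
qed

lemma perm_stat_shift:
  "perm_stat I v m cs ps = perm_stat I v m' cs ps + (\<Sum>i\<in>I. (\<Sum>j<length cs. (cs ! j) i) * (m' i - m i))"
proof -
  have "perm_stat I v m cs ps
      = (\<Sum>j<length cs. \<Sum>i\<in>I. (cs ! j) i * (v (ps ! j) i - m' i) + (cs ! j) i * (m' i - m i))"
    unfolding perm_stat_def inner_on_def by (intro sum.cong refl) (simp add: algebra_simps)
  also have "\<dots> = perm_stat I v m' cs ps + (\<Sum>j<length cs. \<Sum>i\<in>I. (cs ! j) i * (m' i - m i))"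
    unfolding perm_stat_def inner_on_def sum.distrib by simp
  also have "(\<Sum>j<length cs. \<Sum>i\<in>I. (cs ! j) i * (m' i - m i))
      = (\<Sum>i\<in>I. (\<Sum>j<length cs. (cs ! j) i) * (m' i - m i))"
    by (subst sum.swap) (simp add: sum_distrib_right)
  finally show ?thesis .
qed

lemma perm_stat_Cons:
  assumes "finite A" "a \<in> A" "card A = Suc (length cs)"
  shows "perm_stat I v (set_mean A v) (c # cs) (a # ps) =
    inner_on I (\<lambda>i. c i - list_mean cs i) (\<lambda>i. v a i - set_mean A v i)
      + perm_stat I v (set_mean (A - {a}) v) cs ps"
proof -
  have "perm_stat I v (set_mean A v) (c # cs) (a # ps)
      = inner_on I c (\<lambda>i. v a i - set_mean A v i) + perm_stat I v (set_mean A v) cs ps"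
    unfolding perm_stat_def length_Cons sum.lessThan_Suc_shift by simp
  also have "perm_stat I v (set_mean A v) cs ps = perm_stat I v (set_mean (A - {a}) v) cs ps
      + (\<Sum>i\<in>I. list_mean cs i * (set_mean A v i - v a i))"
  proof -
    have "(\<Sum>j<length cs. (cs ! j) i) * (set_mean (A - {a}) v i - set_mean A v i)
        = list_mean cs i * (set_mean A v i - v a i)" for i
      unfolding set_mean_Diff_singleton[OF assms(1,2), of v i, symmetric] assms(3) list_mean_def
      by (cases "cs = []") simp_all
    then show ?thesis by (simp add: perm_stat_shift[of _ _ "set_mean A v" _ _ "set_mean (A - {a}) v"])
  qed
  finally show ?thesis by (simp add: inner_on_def algebra_simps sum.distrib sum_subtractf)
qed

lemma sum_permutations_of_set_Cons:
  assumes "finite A" "A \<noteq> {}"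
  shows "(\<Sum>ps\<in>permutations_of_set A. F ps) = (\<Sum>a\<in>A. \<Sum>ps\<in>permutations_of_set (A - {a}). F (a # ps))"
proof -
  have "(\<Sum>ps\<in>permutations_of_set A. F ps)
      = (\<Sum>a\<in>A. \<Sum>ps\<in>(\<lambda>xs. a # xs) ` permutations_of_set (A - {a}). F ps)"
    unfolding permutations_of_set_nonempty[OF assms(2)]
    by (rule sum.UNION_disjoint) (use assms(1) in auto)
  also have "\<dots> = (\<Sum>a\<in>A. \<Sum>ps\<in>permutations_of_set (A - {a}). F (a # ps))"
    by (rule sum.cong[OF refl]) (simp add: sum.reindex inj_on_def)
  finally show ?thesis .
qed

lemma sum_permutations_exp_perm_stat_le:
  assumes "finite A" "card A = length cs" "\<forall>a\<in>A. \<forall>i\<in>I. \<bar>v a i\<bar> \<le> 1"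
  shows "(\<Sum>ps\<in>permutations_of_set A. exp (t * perm_stat I v (set_mean A v) cs ps))
    \<le> fact (card A) * exp (t\<^sup>2 / 2 * card I * tail_mean_dev I cs)"
  using assms
proof (induction cs arbitrary: A)
  case Nil
  then show ?case by (simp add: perm_stat_def)
next
  case (Cons c cs)
  show ?case
  proof (cases "cs = []")
    case True
    with Cons.prems obtain a where A: "A = {a}" by (auto simp: card_Suc_eq)
    then have "permutations_of_set A = {[a]}" by (simp add: permutations_of_set_nonempty)
    then show ?thesis using True A by (simp add: perm_stat_def inner_on_def set_mean_def)
  next
    case False
    define D where "D = (\<lambda>i. c i - list_mean cs i)"
    define B where "B = exp (t\<^sup>2 / 2 * card I * tail_mean_dev I cs)"
    have card_A: "card A = Suc (length cs)" and "A \<noteq> {}" using Cons.prems by auto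
    have "(\<Sum>ps\<in>permutations_of_set (A - {a}). exp (t * perm_stat I v (set_mean A v) (c # cs) (a # ps)))
        \<le> exp (t * inner_on I D (\<lambda>i. v a i - set_mean A v i)) * (fact (length cs) * B)"
      if "a \<in> A" for a
    proof -
      have "(\<Sum>ps\<in>permutations_of_set (A - {a}). exp (t * perm_stat I v (set_mean (A - {a}) v) cs ps))
          \<le> fact (length cs) * B"
        using Cons.IH[of "A - {a}"] Cons.prems that card_A by (simp add: B_def)
      then show ?thesis
        by (simp add: perm_stat_Cons[OF Cons.prems(1) that card_A] D_def distrib_left exp_add
            sum_distrib_left[symmetric] mult_left_mono)
    qed
    then have "(\<Sum>ps\<in>permutations_of_set A. exp (t * perm_stat I v (set_mean A v) (c # cs) ps))
        \<le> (\<Sum>a\<in>A. exp (t * inner_on I D (\<lambda>i. v a i - set_mean A v i))) * (fact (length cs) * B)"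
      by (simp add: sum_permutations_of_set_Cons[OF Cons.prems(1) \<open>A \<noteq> {}\<close>] sum_distrib_right sum_mono)
    also have "\<dots> \<le> card A * exp (t\<^sup>2 / 2 * card I * (\<Sum>i\<in>I. (D i)\<^sup>2)) * (fact (length cs) * B)"
      using Cons.prems by (intro mult_right_mono sum_exp_inner_on_centred_le) (auto simp: B_def)
    also have "\<dots> = fact (card A) * exp (t\<^sup>2 / 2 * card I * tail_mean_dev I (c # cs))"
      using False by (simp add: card_A B_def D_def algebra_simps exp_add)
    finally show ?thesis .
  qed
qed

section \<open>Tensor indices, averages and slices\<close>

lemma tidx_Nil [simp]: "tidx [] = {[]}"
  by (auto simp: tidx_def)

lemma Nil_notin_tidx_Cons [simp]: "[] \<notin> tidx (a # ns)"
  by (simp add: tidx_def)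

lemma Cons_in_tidx_Cons_iff [simp]: "j # l \<in> tidx (a # ns) \<longleftrightarrow> j < a \<and> l \<in> tidx ns"
  by (auto simp: tidx_def All_less_Suc2)

lemma tidx_Cons: "tidx (a # ns) = (\<lambda>(j, l). j # l) ` ({..<a} \<times> tidx ns)"
proof -
  have "x \<in> tidx (a # ns) \<Longrightarrow> x \<in> (\<lambda>(j, l). j # l) ` ({..<a} \<times> tidx ns)" for x
    by (cases x) (auto simp: image_iff)
  then show ?thesis by auto
qed

lemma finite_tidx [simp]: "finite (tidx ns)"
  by (induction ns) (auto simp: tidx_Cons)

lemma length_tidx: "l \<in> tidx ns \<Longrightarrow> length l = length ns"
  by (simp add: tidx_def)

lemma append_in_tidx: "i \<in> tidx xs \<Longrightarrow> j \<in> tidx ys \<Longrightarrow> i @ j \<in> tidx (xs @ ys)"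
  unfolding tidx_def by (auto simp: nth_append)

lemma list_update_in_tidx: "idx \<in> tidx N \<Longrightarrow> k < length N \<Longrightarrow> c < N ! k \<Longrightarrow> idx[k := c] \<in> tidx N"
  unfolding tidx_def by (auto simp: nth_list_update)

lemma sum_tidx_Cons: "(\<Sum>l\<in>tidx (a # ns). f l) = (\<Sum>j<a. \<Sum>l\<in>tidx ns. f (j # l))"
  unfolding tidx_Cons
  by (subst sum.reindex) (auto simp: inj_on_def sum.cartesian_product case_prod_unfold)

lemma sum_tidx_append: "(\<Sum>l\<in>tidx (xs @ ys). f l) = (\<Sum>i\<in>tidx xs. \<Sum>j\<in>tidx ys. f (i @ j))"
  by (induction xs arbitrary: f) (simp_all add: sum_tidx_Cons)

lemma card_tidx: "card (tidx ns) = prod_list ns"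
  by (induction ns) (simp_all add: tidx_Cons card_image inj_on_def card_cartesian_product)

definition slice :: "(nat list \<Rightarrow> real) \<Rightarrow> nat \<Rightarrow> nat list \<Rightarrow> real" where
  "slice W j = (\<lambda>i. W (i @ [j]))"

definition avg_increment :: "nat list \<Rightarrow> nat \<Rightarrow> (nat list \<Rightarrow> real) \<Rightarrow> (nat list \<Rightarrow> real) \<Rightarrow> real" where
  "avg_increment N k U x =
     tinner (take (Suc k) N) (tavg N (Suc k) U) (tavg N (Suc k) x)
       - real (N ! k) * tinner (take k N) (tavg N k U) (tavg N k x)"

lemma tnorm_sq: "(tnorm ns A)\<^sup>2 = tinner ns A A"
  by (simp add: tnorm_def tinner_def sum_nonneg)

lemma tavg_eq_set_mean_slice:
  assumes "k < length N"
  shows "tavg N k x = set_mean {..<N ! k} (slice (tavg N (Suc k) x))"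
proof
  fix i
  have drop: "drop k N = N ! k # drop (Suc k) N" using assms by (simp add: Cons_nth_drop_Suc)
  show "tavg N k x i = set_mean {..<N ! k} (slice (tavg N (Suc k) x)) i"
    unfolding tavg_def set_mean_def slice_def drop sum_tidx_Cons
    by (simp add: sum_divide_distrib[symmetric] mult.commute)
qed

lemma tavg_restrict:
  assumes "i \<in> tidx (take k N)"
  shows "tavg N k (restrict x (tidx N)) i = tavg N k x i"
proof -
  have "i @ j \<in> tidx N" if "j \<in> tidx (drop k N)" for j
    using append_in_tidx[OF assms that] by simp
  then show ?thesis unfolding tavg_def by (intro arg_cong2[where f = "(/)"] sum.cong) auto
qed

lemma abs_tavg_le_1:
  assumes "\<forall>idx\<in>tidx N. \<bar>x idx\<bar> \<le> 1" "i \<in> tidx (take k N)"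
  shows "\<bar>tavg N k x i\<bar> \<le> 1"
proof -
  have "\<bar>\<Sum>j\<in>tidx (drop k N). x (i @ j)\<bar> \<le> (\<Sum>j\<in>tidx (drop k N). \<bar>x (i @ j)\<bar>)" by (rule sum_abs)
  also have "\<dots> \<le> real (card (tidx (drop k N))) * 1"
    using assms append_in_tidx[OF assms(2), of _ "drop k N"] by (intro sum_bounded_above) auto
  finally show ?thesis by (simp add: tavg_def card_tidx divide_le_eq)
qed

lemma tavg_Suc_modeprod_perm_mat:
  assumes "length i = k" "p j < N ! k"
  shows "tavg N (Suc k) (modeprod (N ! k) k (perm_mat p) x) (i @ [j]) = tavg N (Suc k) x (i @ [p j])"
proof -
  have "modeprod (N ! k) k (perm_mat p) x (i @ [j] @ l) = x (i @ [p j] @ l)" for l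
  proof -
    have "modeprod (N ! k) k (perm_mat p) x (i @ [j] @ l)
        = (\<Sum>c<N ! k. if c = p j then x (i @ [c] @ l) else 0)"
      unfolding modeprod_def perm_mat_def using assms(1)
      by (intro sum.cong refl) (simp add: nth_append list_update_append)
    then show ?thesis using assms(2) by simp
  qed
  then show ?thesis unfolding tavg_def by simp
qed

lemma tavg_modeprod_perm_mat:
  assumes "k < length N" "bij_betw p {..<N ! k} {..<N ! k}" "i \<in> tidx (take k N)"
  shows "tavg N k (modeprod (N ! k) k (perm_mat p) x) i = tavg N k x i"
proof -
  have "length i = k" using length_tidx[OF assms(3)] assms(1) by simp
  moreover have "j < N ! k \<Longrightarrow> p j < N ! k" for j using assms(2) by (auto simp: bij_betw_def)
  ultimately have "(\<Sum>j<N ! k. tavg N (Suc k) (modeprod (N ! k) k (perm_mat p) x) (i @ [j]))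
      = (\<Sum>j<N ! k. tavg N (Suc k) x (i @ [p j]))"
    by (intro sum.cong refl tavg_Suc_modeprod_perm_mat) auto
  also have "\<dots> = (\<Sum>j<N ! k. tavg N (Suc k) x (i @ [j]))"
    by (rule sum.reindex_bij_betw[OF assms(2)])
  finally show ?thesis by (simp add: tavg_eq_set_mean_slice[OF assms(1)] set_mean_def slice_def)
qed

lemma tinner_take_Suc:
  assumes "k < length N"
  shows "tinner (take (Suc k) N) A B = (\<Sum>j<N ! k. inner_on (tidx (take k N)) (slice A j) (slice B j))"
  unfolding tinner_def inner_on_def slice_def take_Suc_conv_app_nth[OF assms] sum_tidx_append
  by (simp add: sum_tidx_Cons sum.swap[of _ "tidx (take k N)"])

lemma avg_increment_eq_sum_slices:
  assumes "k < length N"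
  shows "avg_increment N k U x = (\<Sum>j<N ! k.
    inner_on (tidx (take k N)) (slice (tavg N (Suc k) U) j) (\<lambda>i. slice (tavg N (Suc k) x) j i - tavg N k x i))"
proof -
  let ?I = "tidx (take k N)" and ?W = "slice (tavg N (Suc k) U)"
  have "real (N ! k) * tinner (take k N) (tavg N k U) (tavg N k x)
      = (\<Sum>i\<in>?I. (\<Sum>j<N ! k. ?W j i) * tavg N k x i)"
    unfolding tinner_def tavg_eq_set_mean_slice[OF assms, of U]
    by (cases "N ! k = 0") (simp_all add: set_mean_def sum_distrib_left)
  also have "\<dots> = (\<Sum>j<N ! k. inner_on ?I (?W j) (tavg N k x))"
    unfolding inner_on_def by (simp add: sum_distrib_right sum.swap[of _ ?I])
  finally have "real (N ! k) * tinner (take k N) (tavg N k U) (tavg N k x)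
      = (\<Sum>j<N ! k. inner_on ?I (?W j) (tavg N k x))" .
  then show ?thesis
    unfolding avg_increment_def tinner_take_Suc[OF assms]
    by (simp add: inner_on_def right_diff_distrib sum_subtractf)
qed

section \<open>The increment under permutations of a mode\<close>

lemma bij_betw_nth_permutations_of_set:
  assumes "ps \<in> permutations_of_set {..<n}"
  shows "bij_betw ((!) ps) {..<n} {..<n}"
proof -
  have "distinct ps" "set ps = {..<n}" using assms by (auto simp: permutations_of_set_def)
  moreover from this have "length ps = n" using distinct_card by fastforce
  ultimately show ?thesis by (intro bij_betw_nth) auto
qed

lemma avg_increment_modeprod_perm_mat:
  assumes "k < length N" "ps \<in> permutations_of_set {..<N ! k}"
  shows "avg_increment N k U (modeprod (N ! k) k (perm_mat ((!) ps)) x)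
    = perm_stat (tidx (take k N)) (slice (tavg N (Suc k) x)) (tavg N k x)
        (map (slice (tavg N (Suc k) U)) [0..<N ! k]) ps"
proof -
  let ?x' = "modeprod (N ! k) k (perm_mat ((!) ps)) x"
  have bij: "bij_betw ((!) ps) {..<N ! k} {..<N ! k}"
    using assms(2) by (rule bij_betw_nth_permutations_of_set)
  have "slice (tavg N (Suc k) ?x') j i = slice (tavg N (Suc k) x) (ps ! j) i"
    if "i \<in> tidx (take k N)" "j < N ! k" for i j
    using length_tidx[OF that(1)] assms(1) bij_betwE[OF bij] that(2)
    by (simp add: slice_def tavg_Suc_modeprod_perm_mat)
  moreover have "tavg N k ?x' i = tavg N k x i" if "i \<in> tidx (take k N)" for i
    using assms(1) bij that by (rule tavg_modeprod_perm_mat)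
  ultimately show ?thesis
    unfolding avg_increment_eq_sum_slices[OF assms(1)] perm_stat_def inner_on_def
    by (intro sum.cong) auto
qed

lemma list_mean_map_upt:
  "list_mean (map a [l..<n]) i = (\<Sum>c\<in>{l..<n}. a c i) / (n - l)"
proof -
  have "(\<Sum>j<n - l. a ([l..<n] ! j) i) = (\<Sum>c\<in>{l..<n}. a c i)"
    by (simp add: sum.atLeastLessThan_shift_0[of _ l n] atLeast0LessThan add.commute)
  then show ?thesis unfolding list_mean_def by simp
qed

lemma tail_mean_dev_map_upt:
  "tail_mean_dev I (map a [l..<n]) = (\<Sum>r\<in>{l..<n}.
     if Suc r < n then (\<Sum>i\<in>I. (a r i - (\<Sum>c\<in>{Suc r..<n}. a c i) / (n - Suc r))\<^sup>2) else 0)"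
proof (induction "n - l" arbitrary: l)
  case (Suc d)
  then have "[l..<n] = l # [Suc l..<n]" by (simp add: upt_conv_Cons)
  with Suc show ?case
    by (cases "Suc l < n") (simp_all add: list_mean_map_upt sum.atLeast_Suc_lessThan)
qed simp

lemma sum_Amat_mult:
  assumes "r < n"
  shows "(\<Sum>c<n. Amat n r c * w c)
    = (if Suc r < n then w r - (\<Sum>c\<in>{Suc r..<n}. w c) / (n - Suc r) else 0)"
proof (cases "Suc r < n")
  case True
  have "(\<Sum>c<n. Amat n r c * w c)
      = (\<Sum>c<n. (if c = r then w r else 0) - (if c \<in> {Suc r..<n} then w c / (n - Suc r) else 0))"
    using True by (intro sum.cong refl) (auto simp: Amat_def of_nat_diff)
  also have "\<dots> = (\<Sum>c<n. if c = r then w r else 0) - (\<Sum>c\<in>{..<n} \<inter> {Suc r..<n}. w c / (n - Suc r))"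
    by (simp only: sum_subtractf sum.inter_restrict[OF finite_lessThan])
  also have "\<dots> = w r - (\<Sum>c\<in>{Suc r..<n}. w c / (n - Suc r))"
    using assms by (subst Int_absorb1) auto
  finally show ?thesis using True by (simp add: sum_divide_distrib)
qed (simp add: Amat_def)

lemma tail_mean_dev_slices_eq_tnorm_Amat:
  assumes "k < length N"
  shows "tail_mean_dev (tidx (take k N)) (map (slice W) [0..<N ! k])
    = (tnorm (take (Suc k) N) (modeprod (N ! k) k (Amat (N ! k)) W))\<^sup>2"
proof -
  let ?n = "N ! k" and ?I = "tidx (take k N)"
  have "slice (modeprod ?n k (Amat ?n) W) r i = (\<Sum>c<?n. Amat ?n r c * W (i @ [c]))"
    if "i \<in> ?I" for i r
    using length_tidx[OF that] assms by (simp add: slice_def modeprod_def nth_append list_update_append)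
  then have "(tnorm (take (Suc k) N) (modeprod ?n k (Amat ?n) W))\<^sup>2
      = (\<Sum>r<?n. \<Sum>i\<in>?I. (\<Sum>c<?n. Amat ?n r c * W (i @ [c]))\<^sup>2)"
    unfolding tnorm_sq tinner_take_Suc[OF assms] by (simp add: inner_on_def power2_eq_square)
  also have "\<dots> = (\<Sum>r<?n. if Suc r < ?n then
      (\<Sum>i\<in>?I. (W (i @ [r]) - (\<Sum>c\<in>{Suc r..<?n}. W (i @ [c])) / (?n - Suc r))\<^sup>2) else 0)"
    by (intro sum.cong refl) (simp add: sum_Amat_mult)
  also have "\<dots> = tail_mean_dev ?I (map (slice W) [0..<?n])"
    unfolding tail_mean_dev_map_upt slice_def by (simp add: atLeast0LessThan)
  finally show ?thesis ..
qed

lemma sum_permutations_exp_avg_increment_le: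
  assumes "k < length N" "\<forall>idx\<in>tidx N. \<bar>x idx\<bar> \<le> 1"
  shows "(\<Sum>ps\<in>permutations_of_set {..<N ! k}.
      exp (t * avg_increment N k U (modeprod (N ! k) k (perm_mat ((!) ps)) x)))
    \<le> fact (N ! k) * exp (t\<^sup>2 / 2 * real (prod_list (take k N))
        * (tnorm (take (Suc k) N) (modeprod (N ! k) k (Amat (N ! k)) (tavg N (Suc k) U)))\<^sup>2)"
proof -
  let ?I = "tidx (take k N)" and ?v = "slice (tavg N (Suc k) x)"
  have "\<bar>?v a i\<bar> \<le> 1" if "a < N ! k" "i \<in> ?I" for a i
  proof -
    have "i @ [a] \<in> tidx (take (Suc k) N)"
      using append_in_tidx[OF that(2), of "[a]" "[N ! k]"] that(1) assms(1)
      by (simp add: take_Suc_conv_app_nth)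
    then show ?thesis unfolding slice_def using assms(2) by (rule abs_tavg_le_1[rotated])
  qed
  then have "(\<Sum>ps\<in>permutations_of_set {..<N ! k}.
      exp (t * perm_stat ?I ?v (set_mean {..<N ! k} ?v) (map (slice (tavg N (Suc k) U)) [0..<N ! k]) ps))
    \<le> fact (card {..<N ! k}) * exp (t\<^sup>2 / 2 * card ?I
        * tail_mean_dev ?I (map (slice (tavg N (Suc k) U)) [0..<N ! k]))"
    by (intro sum_permutations_exp_perm_stat_le) auto
  then show ?thesis
    by (simp add: avg_increment_modeprod_perm_mat[OF assms(1)] tavg_eq_set_mean_slice[OF assms(1), symmetric]
        tail_mean_dev_slices_eq_tnorm_Amat[OF assms(1)] card_tidx)
qed

section \<open>Conditioning on a permutation-invariant statistic\<close>

lemma integral_indicator_eq_of_invariant_law: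
  fixes Y :: "'a \<Rightarrow> 's" and \<phi> :: "'s \<Rightarrow> 's" and T :: "'s \<Rightarrow> 't" and f :: "'s \<Rightarrow> real"
  assumes Y: "Y \<in> measurable M S" and \<phi>Y: "(\<lambda>\<omega>. \<phi> (Y \<omega>)) \<in> measurable M S"
    and law: "distr M S (\<lambda>\<omega>. \<phi> (Y \<omega>)) = distr M S Y"
    and T: "T \<in> measurable S S'" and T_\<phi>: "\<And>y. y \<in> space S \<Longrightarrow> T (\<phi> y) = T y"
    and f: "f \<in> borel_measurable S"
    and A: "A \<in> sets (vimage_algebra (space M) (\<lambda>\<omega>. T (Y \<omega>)) S')"
  shows "(\<integral>\<omega>. indicator A \<omega> * f (\<phi> (Y \<omega>)) \<partial>M) = (\<integral>\<omega>. indicator A \<omega> * f (Y \<omega>) \<partial>M)"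
proof -
  have "sets (vimage_algebra (space M) (\<lambda>\<omega>. T (Y \<omega>)) S')
      = {(\<lambda>\<omega>. T (Y \<omega>)) -` C \<inter> space M | C. C \<in> sets S'}"
    using measurable_space[OF measurable_compose[OF Y T]] by (intro sets_vimage_algebra2) auto
  with A obtain C where C: "C \<in> sets S'" and A_eq: "A = (\<lambda>\<omega>. T (Y \<omega>)) -` C \<inter> space M"
    by blast
  define \<psi> where "\<psi> y = indicator C (T y) * f y" for y
  have \<psi>: "\<psi> \<in> borel_measurable S"
    unfolding \<psi>_def using T C f by measurable
  have "(\<integral>\<omega>. indicator A \<omega> * f (\<phi> (Y \<omega>)) \<partial>M) = (\<integral>\<omega>. \<psi> (\<phi> (Y \<omega>)) \<partial>M)"
    using T_\<phi> measurable_space[OF Y]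
    by (intro Bochner_Integration.integral_cong) (auto simp: A_eq \<psi>_def indicator_def)
  also have "\<dots> = (\<integral>\<omega>. \<psi> (Y \<omega>) \<partial>M)"
    using integral_distr[OF \<phi>Y \<psi>] integral_distr[OF Y \<psi>] law by simp
  also have "\<dots> = (\<integral>\<omega>. indicator A \<omega> * f (Y \<omega>) \<partial>M)"
    by (intro Bochner_Integration.integral_cong) (auto simp: A_eq \<psi>_def indicator_def)
  finally show ?thesis .
qed

lemma real_cond_exp_le_of_invariant_law:
  fixes Y :: "'a \<Rightarrow> 's" and \<phi> :: "'p \<Rightarrow> 's \<Rightarrow> 's" and T :: "'s \<Rightarrow> 't" and f :: "'s \<Rightarrow> real"
  assumes "prob_space M" "finite P" "P \<noteq> {}"
    and Y: "Y \<in> measurable M S"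
    and \<phi>: "\<And>p. p \<in> P \<Longrightarrow> \<phi> p \<in> measurable S S"
    and law: "\<And>p. p \<in> P \<Longrightarrow> distr M S (\<lambda>\<omega>. \<phi> p (Y \<omega>)) = distr M S Y"
    and T: "T \<in> measurable S S'"
    and T_\<phi>: "\<And>p y. p \<in> P \<Longrightarrow> y \<in> space S \<Longrightarrow> T (\<phi> p y) = T y"
    and f: "f \<in> borel_measurable S" "integrable M (\<lambda>\<omega>. f (Y \<omega>))"
    and avg: "\<And>\<omega>. \<omega> \<in> space M \<Longrightarrow> (\<Sum>p\<in>P. f (\<phi> p (Y \<omega>))) / card P \<le> B"
  shows "AE \<omega> in M. real_cond_exp M (vimage_algebra (space M) (\<lambda>\<omega>. T (Y \<omega>)) S') (\<lambda>\<omega>. f (Y \<omega>)) \<omega> \<le> B"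
proof -
  interpret prob_space M by fact
  let ?G = "vimage_algebra (space M) (\<lambda>\<omega>. T (Y \<omega>)) S'"
  define g where "g \<omega> = (\<Sum>p\<in>P. f (\<phi> p (Y \<omega>))) / card P" for \<omega>
  have TY: "(\<lambda>\<omega>. T (Y \<omega>)) \<in> measurable M S'" using Y T by (rule measurable_compose)
  have sets_G: "sets ?G = {(\<lambda>\<omega>. T (Y \<omega>)) -` C \<inter> space M | C. C \<in> sets S'}"
    using measurable_space[OF TY] by (intro sets_vimage_algebra2) auto
  have "subalgebra M ?G"
    unfolding subalgebra_def sets_G using TY by (auto intro: measurable_sets)
  then interpret finite_measure_subalgebra M ?G by unfold_locales
  have \<phi>Y: "(\<lambda>\<omega>. \<phi> p (Y \<omega>)) \<in> measurable M S" if "p \<in> P" for p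
    using Y \<phi>[OF that] by (rule measurable_compose)
  have "integrable (distr M S Y) f"
    by (simp add: integrable_distr_eq[OF Y f(1)] f(2))
  then have int_\<phi>: "integrable M (\<lambda>\<omega>. f (\<phi> p (Y \<omega>)))" if "p \<in> P" for p
    by (metis law[OF that] integrable_distr_eq[OF \<phi>Y[OF that] f(1)])
  have "(\<integral>\<omega>\<in>A. f (Y \<omega>) \<partial>M) = (\<integral>\<omega>\<in>A. g \<omega> \<partial>M)" if "A \<in> sets ?G" for A
  proof -
    have "A \<in> sets M" using that \<open>subalgebra M ?G\<close> by (auto simp: subalgebra_def)
    then have "integrable M (\<lambda>\<omega>. indicator A \<omega> * f (\<phi> p (Y \<omega>)))" if "p \<in> P" for p
      using integrable_real_mult_indicator[OF _ int_\<phi>[OF that]] by (simp add: mult.commute)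
    then have "(\<integral>\<omega>\<in>A. g \<omega> \<partial>M) = (\<Sum>p\<in>P. \<integral>\<omega>. indicator A \<omega> * f (\<phi> p (Y \<omega>)) \<partial>M) / card P"
      unfolding set_lebesgue_integral_def g_def
      by (simp add: sum_distrib_left Bochner_Integration.integral_sum flip: sum_divide_distrib)
    also have "\<dots> = (\<integral>\<omega>\<in>A. f (Y \<omega>) \<partial>M)"
      using integral_indicator_eq_of_invariant_law[OF Y \<phi>Y law T T_\<phi> f(1) that] \<open>finite P\<close> \<open>P \<noteq> {}\<close>
      by (simp add: set_lebesgue_integral_def)
    finally show ?thesis ..
  qed
  moreover have int_g: "integrable M g"
    unfolding g_def using int_\<phi> by auto
  ultimately have "AE \<omega> in M. real_cond_exp M ?G (\<lambda>\<omega>. f (Y \<omega>)) \<omega> = real_cond_exp M ?G g \<omega>"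
    using real_cond_exp_intA[OF int_g] f(2)
    by (intro real_cond_exp_charact) (auto intro: borel_measurable_cond_exp)
  moreover have "AE \<omega> in M. real_cond_exp M ?G g \<omega> \<le> B"
    using int_g avg by (intro real_cond_exp_le_c) (auto simp: g_def)
  ultimately show ?thesis by eventually_elim simp
qed

section \<open>Permuting a mode of a random tensor\<close>

definition permute_mode :: "nat list \<Rightarrow> nat \<Rightarrow> nat list \<Rightarrow> (nat list \<Rightarrow> real) \<Rightarrow> nat list \<Rightarrow> real" where
  "permute_mode N k ps y = restrict (modeprod (N ! k) k (perm_mat ((!) ps)) y) (tidx N)"

lemma measurable_tavg_component:
  assumes "i \<in> tidx (take j N)"
  shows "(\<lambda>y. tavg N j y i) \<in> borel_measurable (PiM (tidx N) (\<lambda>_. borel))"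
proof -
  have "i @ l \<in> tidx N" if "l \<in> tidx (drop j N)" for l
    using append_in_tidx[OF assms that] by simp
  then show ?thesis unfolding tavg_def
    by (intro borel_measurable_divide borel_measurable_sum measurable_component_singleton) auto
qed

lemma measurable_avg_increment: "avg_increment N k U \<in> borel_measurable (PiM (tidx N) (\<lambda>_. borel))"
  unfolding avg_increment_def tinner_def
  by (intro borel_measurable_diff borel_measurable_times borel_measurable_sum borel_measurable_const
      measurable_tavg_component)

lemma avg_increment_restrict: "avg_increment N k U (restrict x (tidx N)) = avg_increment N k U x"
  unfolding avg_increment_def tinner_def by (simp add: tavg_restrict cong: sum.cong)

lemma restrict_tavg_restrict:
  "restrict (tavg N k (restrict y (tidx N))) (tidx (take k N)) = restrict (tavg N k y) (tidx (take k N))"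
  by (intro restrict_ext) (simp add: tavg_restrict)

lemma measurable_permute_mode:
  assumes "k < length N"
  shows "permute_mode N k ps \<in> measurable (PiM (tidx N) (\<lambda>_. borel)) (PiM (tidx N) (\<lambda>_. borel))"
  unfolding permute_mode_def modeprod_def using assms
  by (intro measurable_restrict borel_measurable_sum borel_measurable_times borel_measurable_const
      measurable_component_singleton) (auto simp: list_update_in_tidx)

lemma permute_mode_restrict:
  assumes "k < length N"
  shows "permute_mode N k ps (restrict x (tidx N)) = permute_mode N k ps x"
  unfolding permute_mode_def modeprod_def using assms
  by (intro restrict_ext sum.cong refl) (simp add: list_update_in_tidx)

lemma permute_mode_upt:
  assumes "k < length N"
  shows "permute_mode N k [0..<N ! k] y = restrict y (tidx N)"
  unfolding permute_mode_def
proof (intro restrict_ext)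
  fix idx assume "idx \<in> tidx N"
  then have "idx ! k < N ! k" using assms by (simp add: tidx_def)
  then have "modeprod (N ! k) k (perm_mat ((!) [0..<N ! k])) y idx
      = (\<Sum>c<N ! k. if c = idx ! k then y (idx[k := c]) else 0)"
    unfolding modeprod_def by (intro sum.cong refl) (simp add: perm_mat_def)
  with \<open>idx ! k < N ! k\<close> show "modeprod (N ! k) k (perm_mat ((!) [0..<N ! k])) y idx = y idx"
    by simp
qed

lemma exp_avg_increment_le:
  assumes "k < length N" "\<forall>idx\<in>tidx N. \<bar>x idx\<bar> \<le> 1"
  shows "exp (t * avg_increment N k U x)
    \<le> fact (N ! k) * exp (t\<^sup>2 / 2 * real (prod_list (take k N))
        * (tnorm (take (Suc k) N) (modeprod (N ! k) k (Amat (N ! k)) (tavg N (Suc k) U)))\<^sup>2)"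
proof -
  have "[0..<N ! k] \<in> permutations_of_set {..<N ! k}" by (auto simp: permutations_of_set_def)
  have "exp (t * avg_increment N k U x)
      = exp (t * avg_increment N k U (modeprod (N ! k) k (perm_mat ((!) [0..<N ! k])) x))"
    by (metis avg_increment_restrict permute_mode_def permute_mode_upt[OF assms(1)])
  also have "\<dots> \<le> (\<Sum>ps\<in>permutations_of_set {..<N ! k}.
      exp (t * avg_increment N k U (modeprod (N ! k) k (perm_mat ((!) ps)) x)))"
    using \<open>[0..<N ! k] \<in> permutations_of_set {..<N ! k}\<close> by (intro member_le_sum) auto
  also have "\<dots> \<le> fact (N ! k) * exp (t\<^sup>2 / 2 * real (prod_list (take k N))
        * (tnorm (take (Suc k) N) (modeprod (N ! k) k (Amat (N ! k)) (tavg N (Suc k) U)))\<^sup>2)"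
    by (rule sum_permutations_exp_avg_increment_le[OF assms])
  finally show ?thesis .
qed

lemma distr_permute_mode:
  assumes "mode_exchangeable M N X" "k < length N" "ps \<in> permutations_of_set {..<N ! k}"
  shows "distr M (PiM (tidx N) (\<lambda>_. borel)) (\<lambda>\<omega>. permute_mode N k ps (restrict (X \<omega>) (tidx N)))
    = distr M (PiM (tidx N) (\<lambda>_. borel)) (\<lambda>\<omega>. restrict (X \<omega>) (tidx N))"
proof -
  have "tensor_law M N (\<lambda>\<omega>. modeprod (N ! k) k (perm_mat ((!) ps)) (X \<omega>)) = tensor_law M N X"
    using assms(1,2) bij_betw_nth_permutations_of_set[OF assms(3)] unfolding mode_exchangeable_def by blast
  then show ?thesis unfolding permute_mode_restrict[OF assms(2)] by (simp add: tensor_law_def permute_mode_def)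
qed

lemma restrict_tavg_permute_mode:
  assumes "k < length N" "ps \<in> permutations_of_set {..<N ! k}"
  shows "restrict (tavg N k (permute_mode N k ps y)) (tidx (take k N)) = restrict (tavg N k y) (tidx (take k N))"
  unfolding permute_mode_def
  by (intro restrict_ext)
    (simp add: tavg_restrict tavg_modeprod_perm_mat[OF assms(1) bij_betw_nth_permutations_of_set[OF assms(2)]])

theorem lemma6:
  fixes M :: "'a measure" and N :: "nat list" and X :: "'a \<Rightarrow> nat list \<Rightarrow> real"
    and U :: "nat list \<Rightarrow> real" and k :: nat and t :: real
  assumes "prob_space M"
    and "length N \<ge> 1" and "\<forall>i<length N. N ! i \<ge> 1"
    and "\<forall>idx\<in>tidx N. (\<lambda>\<omega>. X \<omega> idx) \<in> borel_measurable M"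
    and "\<forall>\<omega>\<in>space M. \<forall>idx\<in>tidx N. \<bar>X \<omega> idx\<bar> \<le> 1"
    and "mode_exchangeable M N X"
    and "k < length N"
  shows "AE \<omega> in M.
    real_cond_exp M (sigma_avg M N k X)
      (\<lambda>\<omega>. exp (t * (tinner (take (Suc k) N) (tavg N (Suc k) U) (tavg N (Suc k) (X \<omega>))
                 - real (N ! k) * tinner (take k N) (tavg N k U) (tavg N k (X \<omega>))))) \<omega>
    \<le> exp (t\<^sup>2 / 2 * real (prod_list (take k N))
           * (tnorm (take (Suc k) N) (modeprod (N ! k) k (Amat (N ! k)) (tavg N (Suc k) U)))\<^sup>2)"
proof -
  interpret prob_space M by fact
  let ?Y = "\<lambda>\<omega>. restrict (X \<omega>) (tidx N)" and ?P = "permutations_of_set {..<N ! k}"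
  define f where "f y = exp (t * avg_increment N k U y)" for y
  define B where "B = exp (t\<^sup>2 / 2 * real (prod_list (take k N))
    * (tnorm (take (Suc k) N) (modeprod (N ! k) k (Amat (N ! k)) (tavg N (Suc k) U)))\<^sup>2)"
  have f: "f \<in> borel_measurable (PiM (tidx N) (\<lambda>_. borel))"
    unfolding f_def using measurable_avg_increment by measurable
  have Y: "?Y \<in> measurable M (PiM (tidx N) (\<lambda>_. borel))"
    using assms(4) by (intro measurable_restrict) auto
  have T: "(\<lambda>y. restrict (tavg N k y) (tidx (take k N)))
      \<in> measurable (PiM (tidx N) (\<lambda>_. borel)) (PiM (tidx (take k N)) (\<lambda>_. borel))"
    by (intro measurable_restrict measurable_tavg_component)
  have avg: "(\<Sum>ps\<in>?P. f (permute_mode N k ps (?Y \<omega>))) / card ?P \<le> B" if "\<omega> \<in> space M" for \<omega>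
    using sum_permutations_exp_avg_increment_le[OF assms(7), of "?Y \<omega>"] assms(5) that
    by (simp add: f_def B_def permute_mode_def avg_increment_restrict pos_divide_le_eq mult.commute)
  have int: "integrable M (\<lambda>\<omega>. f (?Y \<omega>))"
    using measurable_compose[OF Y f] exp_avg_increment_le[OF assms(7)] assms(5)
    by (intro integrable_const_bound[where B = "fact (N ! k) * B"] AE_I2)
      (auto simp: f_def B_def avg_increment_restrict)
  have "AE \<omega> in M. real_cond_exp M (vimage_algebra (space M)
      (\<lambda>\<omega>. restrict (tavg N k (?Y \<omega>)) (tidx (take k N))) (PiM (tidx (take k N)) (\<lambda>_. borel)))
      (\<lambda>\<omega>. f (?Y \<omega>)) \<omega> \<le> B"
    by (rule real_cond_exp_le_of_invariant_law[where \<phi> = "permute_mode N k",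
          OF assms(1) _ _ Y _ distr_permute_mode[OF assms(6,7)] T _ f int avg])
      (simp_all add: measurable_permute_mode[OF assms(7)] restrict_tavg_permute_mode[OF assms(7)])
  then show ?thesis
    unfolding sigma_avg_def f_def B_def avg_increment_restrict restrict_tavg_restrict
    unfolding avg_increment_def .
qed

end
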